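(* Let $m\ge 1$ be fixed and let $\boldsymbol{\beta}\in\mathbb{R}^m$ be a fixed vector. For each $p$, let $A=A_p\in\mathbb{R}^{m\times p}$ and let $\Psi=\Psi_p\in\mathbb{R}^{p\times p}$ be symmetric positive definite, where as $p$ grows new columns are appended to $A$ and new rows and columns are appended to $\Psi$. Assume: (A.1) there are constants $0<k\le K<\infty$ such that all eigenvalues of $\Psi_p$ lie in $[k,K]$ for all $p$; (A.2) the limit $\lim_{p\to\infty}\frac{1}{p}A_pA_p^T\in\mathbb{R}^{m\times m}$ exists and has full rank $m$. Define $\boldsymbol{\gamma}_0=\boldsymbol{\gamma}_0(p)=(A_p^TA_p+\Psi_p)^{-1}A_p^T\boldsymbol{\beta}\in\mathbb{R}^p$. Then $\|\boldsymbol{\gamma}_0\|_1=\mathcal{O}(1)$ as $p\to\infty$.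
   Context: This arises from the joint latent variable model $y=\boldsymbol{\beta}^T\mathbf{f}+\epsilon$, $\mathbf{x}=A^T\mathbf{f}+\mathbf{e}$, with latent $\mathbf{f}\in\mathbb{R}^m$ (mean zero, identity covariance), $\epsilon$ mean zero with variance $\sigma^2$, $\mathbf{e}$ mean zero with covariance $\Psi$, all mutually uncorrelated; then $\boldsymbol{\gamma}_0^T\mathbf{x}$ is the best linear predictor of $y$ from $\mathbf{x}\in\mathbb{R}^p$. $\|\cdot\|_1$ denotes the $\ell_1$-norm. *)

theory Defs
  imports "Jordan_Normal_Form.Char_Poly" "Jordan_Normal_Form.DL_Rank"
    "Jordan_Normal_Form.Gauss_Jordan_Elimination" "HOL-Library.Landau_Symbols"
begin

text \<open>The growing matrices are encoded by infinite arrays: A_p is the m x p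
  leading block of A, and Psi_p is the p x p leading block of Psi. Appending
  columns (resp. rows and columns) as p grows is thus built in.\<close>

definition A_p :: "nat \<Rightarrow> (nat \<Rightarrow> nat \<Rightarrow> real) \<Rightarrow> nat \<Rightarrow> real mat" where
  "A_p m A p = mat m p (\<lambda>(i, j). A i j)"

definition Psi_p :: "(nat \<Rightarrow> nat \<Rightarrow> real) \<Rightarrow> nat \<Rightarrow> real mat" where
  "Psi_p Psi p = mat p p (\<lambda>(i, j). Psi i j)"

definition pos_def_mat :: "real mat \<Rightarrow> bool" where
  "pos_def_mat M \<longleftrightarrow> M \<in> carrier_mat (dim_row M) (dim_row M) \<and> transpose_mat M = M \<and>
     (\<forall>v \<in> carrier_vec (dim_row M). v \<noteq> 0\<^sub>v (dim_row M) \<longrightarrow> v \<bullet> (M *\<^sub>v v) > 0)"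

definition gamma0 :: "real mat \<Rightarrow> real mat \<Rightarrow> real vec \<Rightarrow> real vec" where
  "gamma0 A Psi \<beta> = the (mat_inverse (transpose_mat A * A + Psi)) *\<^sub>v (transpose_mat A *\<^sub>v \<beta>)"

definition l1_norm_vec :: "real vec \<Rightarrow> real" where
  "l1_norm_vec v = (\<Sum>i<dim_vec v. \<bar>v $ i\<bar>)"

end

theory Submission
  imports Defs "HOL-Analysis.Function_Topology"
begin

text \<open>Let \<open>w = \<beta> - A \<gamma>\<^sub>0\<close> be the residual. The normal equation reads \<open>\<Psi> \<gamma>\<^sub>0 = A\<^sup>T w =: u\<close>,
  and testing it against \<open>\<gamma>\<^sub>0\<close> gives \<open>Q := \<gamma>\<^sub>0\<^sup>T \<Psi> \<gamma>\<^sub>0 = w\<^sup>T \<beta> - |w|\<^sup>2 \<le> |w| |\<beta>|\<close>.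
  The upper eigenvalue bound gives \<open>|u|\<^sup>2 \<le> K Q\<close>, and (A.2) gives \<open>|u|\<^sup>2 = w\<^sup>T A A\<^sup>T w \<ge> c p |w|\<^sup>2\<close>
  for large \<open>p\<close>; together \<open>|u|\<^sup>2 = O(1/p)\<close>. The lower eigenvalue bound gives
  \<open>k |\<gamma>\<^sub>0| \<le> |u|\<close>, so \<open>|\<gamma>\<^sub>0| = O(1/\<surd>p)\<close> and \<open>\<parallel>\<gamma>\<^sub>0\<parallel>\<^sub>1 \<le> \<surd>p |\<gamma>\<^sub>0| = O(1)\<close>.\<close>

text \<open>Since the dimension \<open>p\<close> varies, vectors of \<open>\<real>\<^sup>n\<close> are represented by functions
  \<open>nat \<Rightarrow> real\<close> of which only the first \<open>n\<close> values matter, and matrices by their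
  coefficient functions \<open>nat \<Rightarrow> nat \<Rightarrow> real\<close>.\<close>

definition dotn :: "nat \<Rightarrow> (nat \<Rightarrow> real) \<Rightarrow> (nat \<Rightarrow> real) \<Rightarrow> real" where
  "dotn n x y = (\<Sum>i<n. x i * y i)"

definition bform :: "(nat \<Rightarrow> nat \<Rightarrow> real) \<Rightarrow> nat \<Rightarrow> (nat \<Rightarrow> real) \<Rightarrow> (nat \<Rightarrow> real) \<Rightarrow> real" where
  "bform S n x y = (\<Sum>i<n. \<Sum>j<n. x i * S i j * y j)"

abbreviation sqnorm :: "nat \<Rightarrow> (nat \<Rightarrow> real) \<Rightarrow> real" where
  "sqnorm n x \<equiv> dotn n x x"

abbreviation qform :: "(nat \<Rightarrow> nat \<Rightarrow> real) \<Rightarrow> nat \<Rightarrow> (nat \<Rightarrow> real) \<Rightarrow> real" where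
  "qform S n x \<equiv> bform S n x x"

definition symmetric_coeffs :: "nat \<Rightarrow> (nat \<Rightarrow> nat \<Rightarrow> real) \<Rightarrow> bool" where
  "symmetric_coeffs n S \<longleftrightarrow> (\<forall>i<n. \<forall>j<n. S i j = S j i)"

lemma sqnorm_nonneg: "0 \<le> sqnorm n x"
  unfolding dotn_def by (intro sum_nonneg) simp

lemma sqnorm_eq_0D: "sqnorm n x = 0 \<Longrightarrow> i < n \<Longrightarrow> x i = 0"
  unfolding dotn_def by (subst (asm) sum_nonneg_eq_0_iff) auto

lemma sqnorm_scale: "sqnorm n (\<lambda>i. c * x i) = c^2 * sqnorm n x"
  unfolding dotn_def sum_distrib_left by (intro sum.cong refl) (simp add: power2_eq_square)

lemma qform_scale: "qform S n (\<lambda>i. c * x i) = c^2 * qform S n x"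
  unfolding bform_def sum_distrib_left by (intro sum.cong refl) (simp add: power2_eq_square)

lemma bform_scale_coeffs: "bform (\<lambda>i j. c * S i j) n x y = c * bform S n x y"
  unfolding bform_def sum_distrib_left by (intro sum.cong refl) (simp add: algebra_simps)

lemma bform_commute:
  assumes "symmetric_coeffs n S"
  shows "bform S n y x = bform S n x y"
  unfolding bform_def using assms
  by (subst sum.swap) (intro sum.cong refl, simp add: symmetric_coeffs_def mult.commute)

lemma sqnorm_add: "sqnorm n (\<lambda>i. x i + t * y i) = sqnorm n x + t * (2 * dotn n x y) + t^2 * sqnorm n y"
  unfolding dotn_def sum_distrib_left sum.distrib[symmetric]
  by (intro sum.cong refl) (simp add: algebra_simps power2_eq_square)

lemma qform_add:
  assumes "symmetric_coeffs n S"
  shows "qform S n (\<lambda>i. x i + t * y i) = qform S n x + t * (2 * bform S n x y) + t^2 * qform S n y"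
proof -
  have "qform S n (\<lambda>i. x i + t * y i) = qform S n x + t * (bform S n x y + bform S n y x) + t^2 * qform S n y"
    unfolding bform_def sum_distrib_left sum.distrib[symmetric]
    by (intro sum.cong refl) (simp add: algebra_simps power2_eq_square)
  then show ?thesis using bform_commute[OF assms, of y x] by simp
qed

lemma nonneg_quadratic_discriminant:
  fixes a b c :: real
  assumes "\<And>t. 0 \<le> a + t * b + t^2 * c" and "0 \<le> c"
  shows "b^2 \<le> 4 * a * c"
proof (cases "c = 0")
  case True
  have "b = 0"
  proof (rule ccontr)
    assume "b \<noteq> 0"
    have "0 \<le> a + (-(\<bar>a\<bar> + 1) / b) * b" using assms(1)[of "-(\<bar>a\<bar> + 1) / b"] True by simp
    also have "\<dots> = a - (\<bar>a\<bar> + 1)" using \<open>b \<noteq> 0\<close> by simp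
    finally show False by simp
  qed
  then show ?thesis using True by simp
next
  case False
  then have c: "c > 0" using assms(2) by simp
  have "0 \<le> a + (-b/(2*c)) * b + (-b/(2*c))^2 * c" by (rule assms(1))
  also have "\<dots> = a - b^2 / (4 * c)" using c by (simp add: field_simps power2_eq_square)
  finally show ?thesis using c by (simp add: field_simps)
qed

lemma cauchy_schwarz_dotn: "(dotn n x y)^2 \<le> sqnorm n x * sqnorm n y"
proof -
  have "(2 * dotn n x y)^2 \<le> 4 * sqnorm n x * sqnorm n y"
    using sqnorm_add[of n x _ y] sqnorm_nonneg
    by (intro nonneg_quadratic_discriminant) metis+
  then show ?thesis by (simp add: power2_eq_square)
qed

lemma cauchy_schwarz_bform:
  assumes "symmetric_coeffs n S" and psd: "\<And>x. 0 \<le> qform S n x"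
  shows "(bform S n x y)^2 \<le> qform S n x * qform S n y"
proof -
  have "(2 * bform S n x y)^2 \<le> 4 * qform S n x * qform S n y"
    using qform_add[OF assms(1), of x _ y] psd
    by (intro nonneg_quadratic_discriminant) metis+
  then show ?thesis by (simp add: power2_eq_square)
qed

lemma sum_abs_squared_le: "(\<Sum>i<n. \<bar>x i\<bar>)^2 \<le> real n * sqnorm n x"
  using cauchy_schwarz_dotn[of n "\<lambda>_. 1" "\<lambda>i. \<bar>x i\<bar>"] by (simp add: dotn_def power2_eq_square)

lemma power2_le_mult_imp_le:
  fixes x a :: real
  assumes "0 \<le> x" "0 \<le> a" "x^2 \<le> a * x"
  shows "x \<le> a"
  using assms by (cases "x = 0") (auto simp: power2_eq_square)

subsection \<open>The smallest eigenvalue of a symmetric form\<close>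

lemma continuous_on_qform: "continuous_on X (\<lambda>x. qform S n x)"
  and continuous_on_sqnorm: "continuous_on X (\<lambda>x. sqnorm n x)"
proof -
  have coord: "continuous_on X (\<lambda>x::nat \<Rightarrow> real. x i)" for i
    by (rule continuous_on_subset[OF continuous_on_product_coordinates]) simp
  show "continuous_on X (\<lambda>x. qform S n x)"
    unfolding bform_def by (intro continuous_intros coord)
  show "continuous_on X (\<lambda>x. sqnorm n x)"
    unfolding dotn_def by (intro continuous_intros coord)
qed

lemma qform_attains_min_on_sphere:
  assumes "n \<ge> 1"
  shows "\<exists>x0. sqnorm n x0 = 1 \<and> (\<forall>x. sqnorm n x = 1 \<longrightarrow> qform S n x0 \<le> qform S n x)"
proof -
  define cube where "cube = PiE UNIV (\<lambda>i. if i < n then {-1..1::real} else {0})"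
  let ?sphere = "cube \<inter> {x. sqnorm n x = 1}"
  have "compactin (product_topology (\<lambda>i. euclidean) UNIV) cube"
    unfolding cube_def compactin_PiE by auto
  then have "compact cube" by (simp add: euclidean_product_topology)
  moreover have "closed {x. sqnorm n x = 1}"
    by (intro closed_Collect_eq continuous_on_sqnorm continuous_on_const)
  ultimately have compact: "compact ?sphere" by (rule compact_Int_closed)
  have "sqnorm n (\<lambda>i. if i = 0 then 1 else 0) = (\<Sum>i<n. if i = 0 then 1 else 0)"
    unfolding dotn_def by (intro sum.cong) auto
  then have "(\<lambda>i. if i = 0 then 1 else 0) \<in> ?sphere"
    using assms by (auto simp: cube_def)
  then have "?sphere \<noteq> {}" by blast
  then obtain x0 where x0: "x0 \<in> ?sphere" "\<And>y. y \<in> ?sphere \<Longrightarrow> qform S n x0 \<le> qform S n y"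
    using continuous_attains_inf[OF compact _ continuous_on_qform] by blast
  show ?thesis
  proof (intro exI conjI allI impI)
    show "sqnorm n x0 = 1" using x0 by simp
    fix x assume x: "sqnorm n x = 1"
    define y where "y i = (if i < n then x i else 0)" for i
    have qy: "qform S n y = qform S n x" and ny: "sqnorm n y = 1"
      using x by (simp_all add: bform_def dotn_def y_def)
    have "\<bar>y i\<bar> \<le> 1" if "i < n" for i
    proof -
      have "(y i)^2 \<le> sqnorm n y" unfolding dotn_def power2_eq_square
        by (rule member_le_sum) (use that in auto)
      then show ?thesis using ny by (simp add: abs_square_le_1)
    qed
    then have "y \<in> ?sphere" using ny by (auto simp: cube_def y_def abs_le_iff)
    then show "qform S n x0 \<le> qform S n x" using x0(2) qy by metis
  qed
qed

lemma qform_min_ratio: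
  assumes "n \<ge> 1"
  shows "\<exists>x0. sqnorm n x0 = 1 \<and> (\<forall>x. qform S n x0 * sqnorm n x \<le> qform S n x)"
proof -
  obtain x0 where x0: "sqnorm n x0 = 1" "\<And>x. sqnorm n x = 1 \<Longrightarrow> qform S n x0 \<le> qform S n x"
    using qform_attains_min_on_sphere[OF assms] by blast
  have "qform S n x0 * sqnorm n x \<le> qform S n x" for x
  proof (cases "sqnorm n x = 0")
    case True
    then have "qform S n x = 0" unfolding bform_def using sqnorm_eq_0D[OF True] by simp
    then show ?thesis using True by simp
  next
    case False
    define t where "t = sqnorm n x"
    have t: "t > 0" using False sqnorm_nonneg[of n x] by (simp add: t_def)
    define c where "c = 1 / sqrt t"
    have c2: "c^2 = 1 / t" using t by (simp add: c_def power_divide)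
    have "sqnorm n (\<lambda>i. c * x i) = 1" using t by (simp add: sqnorm_scale c2 t_def)
    from x0(2)[OF this] have "qform S n x0 \<le> c^2 * qform S n x" by (simp only: qform_scale)
    then show ?thesis using t by (simp add: c2 t_def field_simps)
  qed
  then show ?thesis using x0(1) by blast
qed

lemma qform_min_eigenvector:
  assumes sym: "symmetric_coeffs n S" and "n \<ge> 1"
  shows "\<exists>x0. sqnorm n x0 = 1 \<and> (\<forall>i<n. (\<Sum>j<n. S i j * x0 j) = qform S n x0 * x0 i)
           \<and> (\<forall>x. qform S n x0 * sqnorm n x \<le> qform S n x)"
proof -
  obtain x0 where x0: "sqnorm n x0 = 1" and min: "\<And>x. qform S n x0 * sqnorm n x \<le> qform S n x"
    using qform_min_ratio[OF assms(2)] by blast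
  let ?\<mu> = "qform S n x0"
  have stationary: "bform S n x0 y = ?\<mu> * dotn n x0 y" for y
  proof -
    \<comment> \<open>The quadratic \<open>t \<mapsto> qform S n (x0 + t y) - \<mu> sqnorm n (x0 + t y)\<close> is nonnegative
      and vanishes at \<open>t = 0\<close>, so its linear coefficient vanishes.\<close>
    have "(2 * bform S n x0 y - ?\<mu> * (2 * dotn n x0 y))^2 \<le> 4 * 0 * (qform S n y - ?\<mu> * sqnorm n y)"
    proof (rule nonneg_quadratic_discriminant)
      fix t
      show "0 \<le> 0 + t * (2 * bform S n x0 y - ?\<mu> * (2 * dotn n x0 y)) + t^2 * (qform S n y - ?\<mu> * sqnorm n y)"
        using min[of "\<lambda>i. x0 i + t * y i"] qform_add[OF sym, of x0 t y] sqnorm_add[of n x0 t y] x0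
        by (simp add: algebra_simps)
      show "0 \<le> qform S n y - ?\<mu> * sqnorm n y" using min[of y] by simp
    qed
    then show ?thesis by simp
  qed
  have "(\<Sum>j<n. S i j * x0 j) = ?\<mu> * x0 i" if "i < n" for i
  proof -
    let ?e = "\<lambda>a. if a = i then 1 else 0"
    have "bform S n ?e x0 = (\<Sum>a<n. if a = i then (\<Sum>j<n. S a j * x0 j) else 0)"
      unfolding bform_def by (intro sum.cong) auto
    then have "bform S n x0 ?e = (\<Sum>j<n. S i j * x0 j)"
      using bform_commute[OF sym, of ?e x0] that by simp
    moreover have "dotn n x0 ?e = (\<Sum>a<n. if a = i then x0 a else 0)"
      unfolding dotn_def by (intro sum.cong) auto
    then have "dotn n x0 ?e = x0 i" using that by simp
    ultimately show ?thesis using stationary[of ?e] by simp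
  qed
  then show ?thesis using x0 min by blast
qed

lemma mat_mult_vec_coeffs:
  "mat n n (\<lambda>(i, j). S i j) *\<^sub>v vec n x = vec n (\<lambda>i. \<Sum>j<n. S i j * x j)"
  by (rule eq_vecI) (auto simp: scalar_prod_def row_def atLeast0LessThan)

lemma vec_nonzero_if_sqnorm_eq_1: "sqnorm n x = 1 \<Longrightarrow> vec n x \<noteq> 0\<^sub>v n"
proof
  assume "sqnorm n x = 1" "vec n x = 0\<^sub>v n"
  then have "\<forall>i<n. x i = 0" by (metis index_vec index_zero_vec(1))
  then have "sqnorm n x = 0" by (simp add: dotn_def)
  then show False using \<open>sqnorm n x = 1\<close> by simp
qed

lemma eigenvalue_mat_coeffsI:
  assumes "sqnorm n x = 1" and "\<And>i. i < n \<Longrightarrow> (\<Sum>j<n. S i j * x j) = \<mu> * x i"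
  shows "eigenvalue (mat n n (\<lambda>(i, j). S i j)) \<mu>"
proof -
  have "mat n n (\<lambda>(i, j). S i j) *\<^sub>v vec n x = \<mu> \<cdot>\<^sub>v vec n x"
    unfolding mat_mult_vec_coeffs using assms(2) by (auto intro!: eq_vecI)
  then show ?thesis
    unfolding eigenvalue_def eigenvector_def using vec_nonzero_if_sqnorm_eq_1[OF assms(1)]
    by (intro exI[of _ "vec n x"]) simp
qed

lemma qform_bounds_of_eigenvalue_bounds:
  assumes sym: "symmetric_coeffs n S"
    and ev: "\<And>e. eigenvalue (mat n n (\<lambda>(i, j). S i j)) e \<Longrightarrow> k \<le> e \<and> e \<le> K"
  shows "k * sqnorm n x \<le> qform S n x" and "qform S n x \<le> K * sqnorm n x"
proof -
  have "k * sqnorm n x \<le> qform S n x \<and> qform S n x \<le> K * sqnorm n x"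
  proof (cases "n = 0")
    case True
    then show ?thesis by (simp add: dotn_def bform_def)
  next
    case False
    then have n: "n \<ge> 1" by simp
    obtain x0 where x0: "sqnorm n x0 = 1" "\<forall>i<n. (\<Sum>j<n. S i j * x0 j) = qform S n x0 * x0 i"
        "\<forall>x. qform S n x0 * sqnorm n x \<le> qform S n x"
      using qform_min_eigenvector[OF sym n] by blast
    have "k \<le> qform S n x0" using ev eigenvalue_mat_coeffsI[OF x0(1)] x0(2) by blast
    then have lower: "k * sqnorm n x \<le> qform S n x"
      using x0(3) sqnorm_nonneg[of n x] by (meson mult_right_mono order_trans)
    let ?S' = "\<lambda>i j. - S i j"
    have sym': "symmetric_coeffs n ?S'" using sym by (simp add: symmetric_coeffs_def)
    have neg: "\<And>y. qform ?S' n y = - qform S n y" by (simp add: bform_def sum_negf)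
    obtain y0 where y0: "sqnorm n y0 = 1" "\<forall>i<n. (\<Sum>j<n. ?S' i j * y0 j) = qform ?S' n y0 * y0 i"
        "\<forall>x. qform ?S' n y0 * sqnorm n x \<le> qform ?S' n x"
      using qform_min_eigenvector[OF sym' n] by blast
    have "\<forall>i<n. (\<Sum>j<n. S i j * y0 j) = qform S n y0 * y0 i"
      using y0(2) neg by (simp add: sum_negf)
    then have "qform S n y0 \<le> K" using ev eigenvalue_mat_coeffsI[OF y0(1)] by blast
    then have "qform S n y0 * sqnorm n x \<le> K * sqnorm n x"
      using sqnorm_nonneg by (rule mult_right_mono)
    moreover have "qform S n x \<le> qform S n y0 * sqnorm n x" using y0(3) neg by simp
    ultimately show ?thesis using lower by simp
  qed
  then show "k * sqnorm n x \<le> qform S n x" "qform S n x \<le> K * sqnorm n x" by auto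
qed

subsection \<open>Linear growth of the Gram form\<close>

lemma qform_perturb:
  assumes "\<And>i j. i < n \<Longrightarrow> j < n \<Longrightarrow> \<bar>S1 i j - S2 i j\<bar> \<le> e" and e: "0 \<le> e"
  shows "qform S2 n x - e * real n * sqnorm n x \<le> qform S1 n x"
proof -
  have "\<bar>qform S1 n x - qform S2 n x\<bar> = \<bar>\<Sum>i<n. \<Sum>j<n. x i * (S1 i j - S2 i j) * x j\<bar>"
    unfolding bform_def sum_subtractf[symmetric] by (simp add: algebra_simps)
  also have "\<dots> \<le> (\<Sum>i<n. \<Sum>j<n. \<bar>x i * (S1 i j - S2 i j) * x j\<bar>)"
    by (rule order_trans[OF sum_abs]) (intro sum_mono sum_abs)
  also have "\<dots> \<le> (\<Sum>i<n. \<Sum>j<n. \<bar>x i\<bar> * e * \<bar>x j\<bar>)"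
    using assms(1) unfolding abs_mult
    by (intro sum_mono mult_right_mono mult_left_mono) auto
  also have "\<dots> = e * (\<Sum>i<n. \<bar>x i\<bar>)^2"
    by (simp add: power2_eq_square sum_product sum_distrib_left algebra_simps)
  also have "\<dots> \<le> e * (real n * sqnorm n x)"
    using e sum_abs_squared_le by (rule mult_left_mono[rotated])
  finally show ?thesis by (simp add: algebra_simps)
qed

lemma eventually_qform_ge_linear:
  fixes D :: "nat \<Rightarrow> nat \<Rightarrow> nat \<Rightarrow> real" and L :: "nat \<Rightarrow> nat \<Rightarrow> real"
  assumes n: "n \<ge> 1"
    and sym: "\<And>p. symmetric_coeffs n (D p)"
    and psd: "\<And>p x. 0 \<le> qform (D p) n x"
    and lim: "\<And>i j. i < n \<Longrightarrow> j < n \<Longrightarrow> (\<lambda>p. (1 / real p) * D p i j) \<longlonglongrightarrow> L i j"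
    and nonsingular: "\<And>x. (\<And>i. i < n \<Longrightarrow> (\<Sum>j<n. L i j * x j) = 0) \<Longrightarrow> sqnorm n x = 0"
  shows "\<exists>c>0. eventually (\<lambda>p. \<forall>x. c * real p * sqnorm n x \<le> qform (D p) n x) sequentially"
proof -
  have "symmetric_coeffs n L"
    unfolding symmetric_coeffs_def
  proof (intro allI impI)
    fix i j assume ij: "i < n" "j < n"
    have "(\<lambda>p. (1 / real p) * D p i j) \<longlonglongrightarrow> L j i"
      using lim[OF ij(2,1)] sym ij by (simp add: symmetric_coeffs_def)
    then show "L i j = L j i" using lim[OF ij] LIMSEQ_unique by blast
  qed
  then obtain x0 where x0: "sqnorm n x0 = 1" "\<forall>i<n. (\<Sum>j<n. L i j * x0 j) = qform L n x0 * x0 i"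
      "\<forall>x. qform L n x0 * sqnorm n x \<le> qform L n x"
    using qform_min_eigenvector[OF _ n] by blast
  define \<mu> where "\<mu> = qform L n x0"
  have "0 \<le> \<mu>"
  proof -
    have "(\<lambda>p. qform (\<lambda>i j. (1 / real p) * D p i j) n x0) \<longlonglongrightarrow> \<mu>"
      unfolding \<mu>_def bform_def by (intro tendsto_intros lim) auto
    moreover have "0 \<le> qform (\<lambda>i j. (1 / real p) * D p i j) n x0" for p
      unfolding bform_scale_coeffs using psd by simp
    ultimately show ?thesis by (intro LIMSEQ_le_const) auto
  qed
  moreover have "\<mu> \<noteq> 0" using nonsingular[of x0] x0 by (auto simp: \<mu>_def)
  ultimately have \<mu>: "\<mu> > 0" by simp
  \<comment> \<open>Half of the smallest eigenvalue \<open>\<mu>\<close> of the limit absorbs the entrywise error of \<open>D p / p\<close>.\<close>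
  define e where "e = \<mu> / (2 * real n)"
  have e: "e > 0" using \<mu> n by (simp add: e_def)
  have "eventually (\<lambda>p. \<forall>i\<in>{..<n}. \<forall>j\<in>{..<n}. dist ((1 / real p) * D p i j) (L i j) < e) sequentially"
    by (intro eventually_ball_finite ballI finite_lessThan tendstoD[OF lim] e) auto
  then have "eventually (\<lambda>p. \<forall>x. \<mu> / 2 * real p * sqnorm n x \<le> qform (D p) n x) sequentially"
    using eventually_ge_at_top[of 1]
  proof eventually_elim
    case (elim p)
    show ?case
    proof
      fix x
      have "qform L n x - e * real n * sqnorm n x \<le> qform (\<lambda>i j. (1 / real p) * D p i j) n x"
        using elim e
        by (intro qform_perturb) (fastforce simp: dist_real_def abs_minus_commute less_imp_le)+
      moreover have "\<mu> * sqnorm n x \<le> qform L n x" using x0(3) \<mu>_def by blast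
      moreover have "e * real n = \<mu> / 2" using n by (simp add: e_def)
      ultimately have "\<mu> / 2 * sqnorm n x \<le> (1 / real p) * qform (D p) n x"
        unfolding bform_scale_coeffs by (simp add: algebra_simps)
      then show "\<mu> / 2 * real p * sqnorm n x \<le> qform (D p) n x"
        using elim by (simp add: field_simps)
    qed
  qed
  then show ?thesis using \<mu> by (intro exI[of _ "\<mu> / 2"]) auto
qed

definition gram :: "(nat \<Rightarrow> nat \<Rightarrow> real) \<Rightarrow> nat \<Rightarrow> nat \<Rightarrow> nat \<Rightarrow> real" where
  "gram A p l l' = (\<Sum>i<p. A l i * A l' i)"

lemma A_p_mult_transpose_index:
  assumes "i < m" "j < m"
  shows "(A_p m A p * transpose_mat (A_p m A p)) $$ (i, j) = gram A p i j"
  using assms by (simp add: A_p_def gram_def scalar_prod_def row_def col_def atLeast0LessThan)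

lemma qform_gram: "qform (gram A p) m x = sqnorm p (\<lambda>i. \<Sum>l<m. A l i * x l)"
proof -
  have "qform (gram A p) m x = (\<Sum>l<m. \<Sum>l'<m. \<Sum>i<p. (A l i * x l) * (A l' i * x l'))"
    unfolding bform_def gram_def sum_distrib_left sum_distrib_right
    by (intro sum.cong refl) (simp add: algebra_simps)
  also have "\<dots> = (\<Sum>i<p. \<Sum>l<m. \<Sum>l'<m. (A l i * x l) * (A l' i * x l'))"
    by (subst sum.swap, rule sum.cong[OF refl], rule sum.swap)
  also have "\<dots> = sqnorm p (\<lambda>i. \<Sum>l<m. A l i * x l)"
    unfolding dotn_def sum_product by simp
  finally show ?thesis .
qed

lemma full_rank_mult_vec_eq_zero:
  assumes L: "L \<in> carrier_mat n n" "vec_space.rank n L = n"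
    and v: "v \<in> carrier_vec n" "L *\<^sub>v v = 0\<^sub>v n"
  shows "v = 0\<^sub>v n"
  using det_0_iff_vec_prod_zero[OF L(1)] vec_space.det_rank_iff[OF L(1)] L(2) v by blast

lemma eventually_qform_gram_ge_linear:
  assumes m: "m \<ge> 1" and L: "L \<in> carrier_mat m m" "vec_space.rank m L = m"
    and lim: "\<forall>i<m. \<forall>j<m. (\<lambda>p. (1 / real p) * (A_p m A p * transpose_mat (A_p m A p)) $$ (i, j))
                \<longlonglongrightarrow> L $$ (i, j)"
  shows "\<exists>c>0. eventually (\<lambda>p. \<forall>x. c * real p * sqnorm m x \<le> qform (gram A p) m x) sequentially"
proof (rule eventually_qform_ge_linear[where L = "\<lambda>i j. L $$ (i, j)"])
  show "(\<lambda>p. (1 / real p) * gram A p i j) \<longlonglongrightarrow> L $$ (i, j)" if "i < m" "j < m" for i j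
  proof -
    have "(\<lambda>p. (1 / real p) * (A_p m A p * transpose_mat (A_p m A p)) $$ (i, j)) \<longlonglongrightarrow> L $$ (i, j)"
      using lim that by blast
    then show ?thesis unfolding A_p_mult_transpose_index[OF that] .
  qed
  show "sqnorm m x = 0" if "\<And>i. i < m \<Longrightarrow> (\<Sum>j<m. L $$ (i, j) * x j) = 0" for x
  proof -
    have "L *\<^sub>v vec m x = 0\<^sub>v m"
      using L(1) that by (intro eq_vecI) (auto simp: scalar_prod_def row_def atLeast0LessThan)
    then have "vec m x = 0\<^sub>v m" using full_rank_mult_vec_eq_zero[OF L] by simp
    then show ?thesis by (simp add: dotn_def vec_eq_iff)
  qed
qed (use m qform_gram sqnorm_nonneg in \<open>auto simp: symmetric_coeffs_def gram_def mult.commute\<close>)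

subsection \<open>The ridge coefficient vector\<close>

lemma transpose_mult_plus_pos_def_inverse:
  fixes Ap Pp :: "real mat"
  assumes Ap: "Ap \<in> carrier_mat m p" and Pp: "Pp \<in> carrier_mat p p"
    and pd: "\<And>v. v \<in> carrier_vec p \<Longrightarrow> v \<noteq> 0\<^sub>v p \<Longrightarrow> v \<bullet> (Pp *\<^sub>v v) > 0"
  defines "M \<equiv> transpose_mat Ap * Ap + Pp"
  obtains B where "mat_inverse M = Some B" "M * B = 1\<^sub>m p" "B \<in> carrier_mat p p"
proof -
  have M: "M \<in> carrier_mat p p" using Ap Pp by (simp add: M_def)
  have "det M \<noteq> 0"
  proof
    assume "det M = 0"
    then obtain v where v: "v \<in> carrier_vec p" "v \<noteq> 0\<^sub>v p" "M *\<^sub>v v = 0\<^sub>v p"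
      using det_0_iff_vec_prod_zero[OF M] by blast
    have Av: "Ap *\<^sub>v v \<in> carrier_vec m" using Ap v by simp
    have "M *\<^sub>v v = transpose_mat Ap *\<^sub>v (Ap *\<^sub>v v) + Pp *\<^sub>v v"
      unfolding M_def using Ap Pp v by (simp add: add_mult_distrib_mat_vec[of _ p p])
    then have "v \<bullet> (M *\<^sub>v v) = v \<bullet> (transpose_mat Ap *\<^sub>v (Ap *\<^sub>v v)) + v \<bullet> (Pp *\<^sub>v v)"
      using v(1) Ap Pp by (simp add: scalar_prod_add_distrib[of _ p])
    moreover have "v \<bullet> (M *\<^sub>v v) = 0" using v(1,3) by simp
    ultimately have "0 = v \<bullet> (transpose_mat Ap *\<^sub>v (Ap *\<^sub>v v)) + v \<bullet> (Pp *\<^sub>v v)"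
      by simp
    moreover have "v \<bullet> (transpose_mat Ap *\<^sub>v (Ap *\<^sub>v v)) = (Ap *\<^sub>v v) \<bullet> (Ap *\<^sub>v v)"
      using transpose_vec_mult_scalar[OF Ap v(1) Av]
        comm_scalar_prod[of v p "transpose_mat Ap *\<^sub>v (Ap *\<^sub>v v)"] v Ap by simp
    moreover have "(Ap *\<^sub>v v) \<bullet> (Ap *\<^sub>v v) \<ge> 0"
      unfolding scalar_prod_def by (intro sum_nonneg) auto
    ultimately show False using pd[OF v(1,2)] by linarith
  qed
  then have "M \<in> Units (ring_mat TYPE(real) p ())"
    by (rule det_non_zero_imp_unit[OF M])
  then obtain B where B: "mat_inverse M = Some B"
    using mat_inverse(1)[OF M, where b = "()"] by (cases "mat_inverse M") auto
  then show ?thesis using that mat_inverse(2)[OF M B] by auto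
qed

lemma pos_def_mat_Psi_p_symmetric: "pos_def_mat (Psi_p Psi p) \<Longrightarrow> symmetric_coeffs p Psi"
  unfolding pos_def_mat_def symmetric_coeffs_def Psi_p_def
  by (metis index_mat(1) index_transpose_mat(1) dim_row_mat dim_col_mat case_prod_conv)

lemma gamma0_normal_equation:
  fixes A Psi :: "nat \<Rightarrow> nat \<Rightarrow> real" and \<beta> :: "real vec"
  assumes pd: "pos_def_mat (Psi_p Psi p)" and \<beta>: "\<beta> \<in> carrier_vec m"
  defines "g \<equiv> gamma0 (A_p m A p) (Psi_p Psi p) \<beta>"
  shows "dim_vec g = p"
    and "i < p \<Longrightarrow> (\<Sum>j<p. Psi i j * g $ j) = (\<Sum>l<m. A l i * (\<beta> $ l - (\<Sum>j<p. A l j * g $ j)))"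
proof -
  define Ap where "Ap = A_p m A p"
  define Pp where "Pp = Psi_p Psi p"
  have Ap: "Ap \<in> carrier_mat m p" by (simp add: Ap_def A_p_def)
  have Pp: "Pp \<in> carrier_mat p p" by (simp add: Pp_def Psi_p_def)
  have "\<And>v. v \<in> carrier_vec p \<Longrightarrow> v \<noteq> 0\<^sub>v p \<Longrightarrow> v \<bullet> (Pp *\<^sub>v v) > 0"
    using pd unfolding pos_def_mat_def Pp_def Psi_p_def by auto
  then obtain B where B: "mat_inverse (transpose_mat Ap * Ap + Pp) = Some B"
      "(transpose_mat Ap * Ap + Pp) * B = 1\<^sub>m p" "B \<in> carrier_mat p p"
    using transpose_mult_plus_pos_def_inverse[OF Ap Pp] by blast
  have M: "transpose_mat Ap * Ap + Pp \<in> carrier_mat p p" using Ap Pp by simp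
  have gB: "g = B *\<^sub>v (transpose_mat Ap *\<^sub>v \<beta>)"
    using B(1) unfolding g_def gamma0_def Ap_def Pp_def by simp
  have Atb: "transpose_mat Ap *\<^sub>v \<beta> \<in> carrier_vec p" using Ap \<beta> by simp
  have g: "g \<in> carrier_vec p" using gB B(3) Atb by simp
  then show "dim_vec g = p" by simp
  have "transpose_mat Ap *\<^sub>v (Ap *\<^sub>v g) + Pp *\<^sub>v g = (transpose_mat Ap * Ap + Pp) *\<^sub>v g"
    using Ap Pp g by (simp add: add_mult_distrib_mat_vec[of _ p p])
  also have "\<dots> = transpose_mat Ap *\<^sub>v \<beta>"
    unfolding gB using B M Atb by (simp flip: assoc_mult_mat_vec)
  finally have eq: "transpose_mat Ap *\<^sub>v (Ap *\<^sub>v g) + Pp *\<^sub>v g = transpose_mat Ap *\<^sub>v \<beta>" .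
  assume i: "i < p"
  have "(transpose_mat Ap *\<^sub>v (Ap *\<^sub>v g)) $ i + (Pp *\<^sub>v g) $ i = (transpose_mat Ap *\<^sub>v \<beta>) $ i"
    using arg_cong[OF eq, of "\<lambda>v. v $ i"] i Ap Pp by simp
  then show "(\<Sum>j<p. Psi i j * g $ j) = (\<Sum>l<m. A l i * (\<beta> $ l - (\<Sum>j<p. A l j * g $ j)))"
    using i g \<beta>
    by (simp add: Ap_def Pp_def A_p_def Psi_p_def scalar_prod_def row_def col_def atLeast0LessThan
        right_diff_distrib sum_subtractf)
qed

lemma sum_abs_le_of_normal_equation:
  fixes A Psi :: "nat \<Rightarrow> nat \<Rightarrow> real" and b g :: "nat \<Rightarrow> real"
  assumes sym: "symmetric_coeffs p Psi"
    and lower: "\<And>x. k * sqnorm p x \<le> qform Psi p x"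
    and upper: "\<And>x. qform Psi p x \<le> K * sqnorm p x"
    and growth: "\<And>x. c * real p * sqnorm m x \<le> qform (gram A p) m x"
    and normal: "\<And>i. i < p \<Longrightarrow> (\<Sum>j<p. Psi i j * g j) = (\<Sum>l<m. A l i * (b l - (\<Sum>j<p. A l j * g j)))"
    and k: "0 < k" and K: "0 \<le> K" and c: "0 < c" and p: "0 < p"
  shows "(\<Sum>i<p. \<bar>g i\<bar>) \<le> sqrt (K^2 * sqnorm m b / (c * k^2))"
proof -
  define w where "w l = b l - (\<Sum>j<p. A l j * g j)" for l
  define u where "u i = (\<Sum>l<m. A l i * w l)" for i
  define Q where "Q = qform Psi p g"
  have Psi_g: "(\<Sum>j<p. Psi i j * g j) = u i" if "i < p" for i
    using normal[OF that] by (simp add: u_def w_def)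
  have psd: "0 \<le> qform Psi p x" for x
    using lower[of x] k sqnorm_nonneg[of p x] by (meson mult_nonneg_nonneg less_imp_le order_trans)
  have Q0: "0 \<le> Q" unfolding Q_def by (rule psd)
  have Q_gu: "Q = dotn p g u"
    unfolding Q_def bform_def dotn_def using Psi_g
    by (intro sum.cong refl) (simp add: sum_distrib_left[symmetric] mult.assoc)
  have Q_wb: "Q = dotn m w b - sqnorm m w"
  proof -
    have "Q = (\<Sum>i<p. \<Sum>l<m. w l * (A l i * g i))"
      unfolding Q_gu dotn_def u_def sum_distrib_left by (intro sum.cong refl) (simp add: algebra_simps)
    also have "\<dots> = (\<Sum>l<m. w l * (b l - w l))"
      by (subst sum.swap) (simp add: sum_distrib_left[symmetric] w_def)
    finally show ?thesis
      unfolding dotn_def sum_subtractf[symmetric] by (simp add: algebra_simps)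
  qed
  have bform_gu: "bform Psi p g u = sqnorm p u"
  proof -
    have "bform Psi p g u = (\<Sum>j<p. (\<Sum>i<p. Psi j i * g i) * u j)"
      using sym unfolding bform_def symmetric_coeffs_def
      by (subst sum.swap) (simp add: sum_distrib_left sum_distrib_right mult_ac)
    then show ?thesis using Psi_g by (simp add: dotn_def)
  qed
  have u_Q: "sqnorm p u \<le> K * Q"
  proof (rule power2_le_mult_imp_le)
    have "(sqnorm p u)^2 \<le> Q * qform Psi p u"
      using cauchy_schwarz_bform[OF sym psd, of g u] bform_gu by (simp add: Q_def)
    also have "\<dots> \<le> Q * (K * sqnorm p u)" using upper[of u] Q0 by (rule mult_left_mono)
    finally show "(sqnorm p u)^2 \<le> K * Q * sqnorm p u" by (simp add: mult_ac)
  qed (use sqnorm_nonneg K Q0 in auto)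
  have Q_w: "Q^2 \<le> sqnorm m w * sqnorm m b"
  proof -
    have "Q \<le> dotn m w b" using Q_wb sqnorm_nonneg[of m w] by simp
    then have "Q^2 \<le> (dotn m w b)^2" using Q0 by (intro power_mono) auto
    then show ?thesis using cauchy_schwarz_dotn[of m w b] by simp
  qed
  have w_u: "c * real p * sqnorm m w \<le> sqnorm p u"
    using growth[of w] by (simp add: qform_gram u_def[abs_def])
  have u_bound: "sqnorm p u \<le> K^2 * sqnorm m b / (c * p)"
  proof (rule power2_le_mult_imp_le)
    have "(sqnorm p u)^2 \<le> K^2 * Q^2"
      using u_Q sqnorm_nonneg power_mono by (fastforce simp: power_mult_distrib)
    also have "\<dots> \<le> K^2 * (sqnorm m w * sqnorm m b)" using Q_w by (simp add: mult_left_mono)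
    also have "\<dots> \<le> K^2 * (sqnorm p u / (c * p) * sqnorm m b)"
      using w_u c p sqnorm_nonneg
      by (intro mult_left_mono mult_right_mono) (simp_all add: field_simps)
    finally show "(sqnorm p u)^2 \<le> K^2 * sqnorm m b / (c * p) * sqnorm p u"
      by (simp add: field_simps)
  qed (use sqnorm_nonneg c p in auto)
  have g_u: "k^2 * sqnorm p g \<le> sqnorm p u"
  proof (rule power2_le_mult_imp_le)
    have "(k * sqnorm p g)^2 \<le> Q^2"
      using lower[of g] k sqnorm_nonneg by (intro power_mono) (auto simp: Q_def)
    also have "\<dots> \<le> sqnorm p g * sqnorm p u" using cauchy_schwarz_dotn Q_gu by simp
    finally have "k^2 * (k * sqnorm p g)^2 \<le> k^2 * (sqnorm p g * sqnorm p u)"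
      by (rule mult_left_mono) simp
    then show "(k^2 * sqnorm p g)^2 \<le> sqnorm p u * (k^2 * sqnorm p g)"
      by (simp add: power_mult_distrib power2_eq_square mult_ac)
  qed (use sqnorm_nonneg in auto)
  have "(\<Sum>i<p. \<bar>g i\<bar>)^2 \<le> real p * sqnorm p g" by (rule sum_abs_squared_le)
  also have "\<dots> \<le> real p * (sqnorm p u / k^2)"
    using g_u k by (intro mult_left_mono) (simp_all add: field_simps)
  also have "\<dots> \<le> real p * (K^2 * sqnorm m b / (c * p) / k^2)"
    using u_bound k by (intro mult_left_mono divide_right_mono) auto
  also have "\<dots> = K^2 * sqnorm m b / (c * k^2)" using p by (simp add: field_simps)
  finally show ?thesis by (rule real_le_rsqrt)
qed

lemma l1_norm_gamma0_le:
  fixes A Psi :: "nat \<Rightarrow> nat \<Rightarrow> real" and \<beta> :: "real vec"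
  assumes pd: "pos_def_mat (Psi_p Psi p)"
    and ev: "\<And>e. eigenvalue (Psi_p Psi p) e \<Longrightarrow> k \<le> e \<and> e \<le> K"
    and \<beta>: "\<beta> \<in> carrier_vec m"
    and growth: "\<And>x. c * real p * sqnorm m x \<le> qform (gram A p) m x"
    and "0 < k" "0 \<le> K" "0 < c" "0 < p"
  shows "l1_norm_vec (gamma0 (A_p m A p) (Psi_p Psi p) \<beta>) \<le> sqrt (K^2 * sqnorm m (($) \<beta>) / (c * k^2))"
proof -
  define g where "g = gamma0 (A_p m A p) (Psi_p Psi p) \<beta>"
  have sym: "symmetric_coeffs p Psi" by (rule pos_def_mat_Psi_p_symmetric[OF pd])
  have ev': "\<And>e. eigenvalue (mat p p (\<lambda>(i, j). Psi i j)) e \<Longrightarrow> k \<le> e \<and> e \<le> K"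
    using ev by (simp add: Psi_p_def)
  have "(\<Sum>i<p. \<bar>g $ i\<bar>) \<le> sqrt (K^2 * sqnorm m (($) \<beta>) / (c * k^2))"
    using sym qform_bounds_of_eigenvalue_bounds[OF sym ev'] growth
      gamma0_normal_equation(2)[OF pd \<beta>] assms(5-)
    unfolding g_def by (intro sum_abs_le_of_normal_equation[where A = A and Psi = Psi]) auto
  then show ?thesis
    using gamma0_normal_equation(1)[OF pd \<beta>] by (simp add: l1_norm_vec_def g_def)
qed

theorem proposition1:
  fixes m :: nat and \<beta> :: "real vec"
    and A :: "nat \<Rightarrow> nat \<Rightarrow> real" and Psi :: "nat \<Rightarrow> nat \<Rightarrow> real"
    and k K :: real
  assumes "m \<ge> 1"
    and "\<beta> \<in> carrier_vec m"
    and "\<forall>p. pos_def_mat (Psi_p Psi p)"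
    and "0 < k" and "k \<le> K"
    and "\<forall>p e. eigenvalue (Psi_p Psi p) e \<longrightarrow> k \<le> e \<and> e \<le> K"
    and "\<exists>L \<in> carrier_mat m m. vec_space.rank m L = m \<and>
           (\<forall>i < m. \<forall>j < m.
              (\<lambda>p. (1 / real p) * (A_p m A p * transpose_mat (A_p m A p)) $$ (i, j))
                \<longlonglongrightarrow> L $$ (i, j))"
  shows "(\<lambda>p. l1_norm_vec (gamma0 (A_p m A p) (Psi_p Psi p) \<beta>)) \<in> O(\<lambda>p. 1)"
proof -
  obtain c where "c > 0"
    and growth: "eventually (\<lambda>p. \<forall>x. c * real p * sqnorm m x \<le> qform (gram A p) m x) sequentially"
    using assms(1,7) eventually_qform_gram_ge_linear by blast
  let ?bound = "sqrt (K^2 * sqnorm m (($) \<beta>) / (c * k^2))"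
  have "eventually (\<lambda>p. norm (l1_norm_vec (gamma0 (A_p m A p) (Psi_p Psi p) \<beta>)) \<le> ?bound * norm (1::real)) at_top"
    using growth eventually_gt_at_top[of 0]
  proof eventually_elim
    case (elim p)
    have "l1_norm_vec (gamma0 (A_p m A p) (Psi_p Psi p) \<beta>) \<le> ?bound"
      using assms(2-6) elim \<open>c > 0\<close> by (intro l1_norm_gamma0_le) auto
    moreover have "0 \<le> l1_norm_vec (gamma0 (A_p m A p) (Psi_p Psi p) \<beta>)"
      unfolding l1_norm_vec_def by (intro sum_nonneg) simp
    ultimately show ?case by simp
  qed
  then show ?thesis by (rule bigoI)
qed

end
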